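(* Let $(u,\mathfrak g)$ be a 6-dimensional Lie algebra with an adapted coframe defining an $SO(3)$-structure with invariant intrinsic torsion $p$, and let $g=\begin{pmatrix} x & y \\ z & w \end{pmatrix}\in GL(2,\mathbb R)$. Then $(ug^{-1},\mathfrak g)$ is half-flat if and only if \[ p(y,-x) - y\frac{\partial p}{\partial u_1}(w,-z)+x\frac{\partial p}{\partial u_2}(w,-z)=0. \] Moreover, it is Hermitian if and only if it is half-flat and \[ p(w,-z)-w\frac{\partial p}{\partial u_1}(y,-x)+z\frac{\partial p}{\partial u_2}(y,-x)=0. \]
   Context: For a Lie algebra $\mathfrak g$ with a frame $u\colon\mathbb R^6\to\mathfrak g$, i.e. coframe $e^1,\dots,e^6$ of $\mathfrak g^*$, let $\sigma=e^{12}+e^{34}+e^{56}$, $\eta^\theta=(\cos\theta\, e^1+\sin\theta\, e^2)\wedge(\cos\theta\, e^3+\sin\theta\, e^4)\wedge(\cos\theta\, e^5+\sin\theta\, e^6)$, $\eta_0=\eta^0,\eta_1=\eta^{2\pi/3},\eta_2=\eta^{-2\pi/3}$ (defining an $SO(3)$-structure), $\gamma=\tfrac43(\eta_0+\eta_1+\eta_2)$, $\hat\gamma=J\gamma$. The $SO(3)$-structure has invariant intrinsic torsion when there are constants $\lambda_1,\dots,\lambda_4$ with $d\eta_0=-\tfrac12\lambda_4\sigma^2$, $d\eta_1=\tfrac1{16}(3\sqrt3\lambda_1+3\lambda_2+\sqrt3\lambda_3+\lambda_4)\sigma^2$, $d\eta_2=-\tfrac1{16}(3\sqrt3\lambda_1-3\lambda_2+\sqrt3\lambda_3-\lambda_4)\sigma^2$,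 $d\hat\gamma=\tfrac12(\lambda_3-\lambda_1)\sigma^2$, $d\sigma=\tfrac34(\lambda_1-\lambda_3)\gamma+\tfrac34(\lambda_2-\lambda_4)\hat\gamma+\tfrac14(\lambda_2+3\lambda_4)(e^{235}+e^{145}+e^{136}+3e^{246})+\tfrac14(3\lambda_1+\lambda_3)(e^{245}+e^{146}+e^{236}+3e^{135})$ (and the remaining intrinsic torsion component vanishes); the intrinsic torsion is the cubic $p=\lambda_1u_1^3+\lambda_2u_1^2u_2+\lambda_3u_1u_2^2+\lambda_4u_2^3$. The structure is half-flat iff $\lambda_2=\lambda_4$, and Hermitian iff half-flat and $\lambda_1=\lambda_3$. The new frame $ug^{-1}$ corresponds to the coframe $xe^1+ye^2,\ ze^1+we^2,\ xe^3+ye^4,\ ze^3+we^4,\ xe^5+ye^6,\ ze^5+we^6$. *)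

theory Defs
  imports "HOL-Analysis.Derivative" "HOL-Combinatorics.Permutations"
begin

text \<open>
The 6-dimensional Lie algebra g is identified, via a reference basis
e_0,...,e_5 (indices 0..5, i.e. e_1..e_6 of the paper shifted by one), with R^6;
its bracket is given by structure constants c:  [e_i,e_j] = sum_m c i j m e_m.
A k-form is represented by its values on k-tuples of reference basis vectors:
a function  nat list => real  (only lists of length k with entries < 6 matter).
A 1-form (covector) is a function  nat => real  (its values on e_0..e_5).
Wedge products use the determinant convention (e^{12}(e_1,e_2) = 1).
\<close>

definition lie_algebra6 :: "(nat \<Rightarrow> nat \<Rightarrow> nat \<Rightarrow> real) \<Rightarrow> bool" where
  "lie_algebra6 c \<longleftrightarrow>
     (\<forall>i<6. \<forall>j<6. \<forall>m<6. c i j m = - c j i m) \<and>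
     (\<forall>i<6. \<forall>j<6. \<forall>k<6. \<forall>l<6.
        (\<Sum>m<6. c i j m * c m k l + c j k m * c m i l + c k i m * c m j l) = 0)"

definition form_eq :: "nat \<Rightarrow> (nat list \<Rightarrow> real) \<Rightarrow> (nat list \<Rightarrow> real) \<Rightarrow> bool" where
  "form_eq k \<alpha> \<beta> \<longleftrightarrow> (\<forall>js. length js = k \<and> set js \<subseteq> {..<6} \<longrightarrow> \<alpha> js = \<beta> js)"

definition wedges :: "(nat \<Rightarrow> real) list \<Rightarrow> nat list \<Rightarrow> real" where
  "wedges ths js = (\<Sum>\<pi> | \<pi> permutes {..<length ths}.
      of_int (sign \<pi>) * (\<Prod>a<length ths. (ths ! a) (js ! \<pi> a)))"

definition wedge :: "nat \<Rightarrow> nat \<Rightarrow> (nat list \<Rightarrow> real) \<Rightarrow> (nat list \<Rightarrow> real) \<Rightarrow> nat list \<Rightarrow> real" where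
  "wedge p q \<alpha> \<beta> js = (\<Sum>\<pi> | \<pi> permutes {..<p+q}.
      of_int (sign \<pi>) * \<alpha> (map (\<lambda>i. js ! \<pi> i) [0..<p]) * \<beta> (map (\<lambda>i. js ! \<pi> i) [p..<p+q]))
      / (fact p * fact q)"

text \<open>Exterior derivative (Chevalley--Eilenberg differential) of a form on the Lie
algebra: d alpha(X_0..X_k) = sum_{a<b} (-1)^(a+b) alpha([X_a,X_b], X_0..^a..^b..X_k).\<close>
definition del2 :: "nat \<Rightarrow> nat \<Rightarrow> nat list \<Rightarrow> nat list" where
  "del2 a b js = map (\<lambda>i. js ! i) (filter (\<lambda>i. i \<noteq> a \<and> i \<noteq> b) [0..<length js])"

definition dform :: "(nat \<Rightarrow> nat \<Rightarrow> nat \<Rightarrow> real) \<Rightarrow> (nat list \<Rightarrow> real) \<Rightarrow> nat list \<Rightarrow> real" where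
  "dform c \<alpha> js = (\<Sum>a<length js. \<Sum>b\<in>{a<..<length js}.
      (-1) ^ (a + b) * (\<Sum>m<6. c (js ! a) (js ! b) m * \<alpha> (m # del2 a b js)))"

text \<open>An (adapted) coframe is given by six 1-forms th 0, ..., th 5
(th k corresponds to e^{k+1} of the paper).\<close>

definition sigma_f :: "(nat \<Rightarrow> nat \<Rightarrow> real) \<Rightarrow> nat list \<Rightarrow> real" where
  "sigma_f th js = wedges [th 0, th 1] js + wedges [th 2, th 3] js + wedges [th 4, th 5] js"

definition sigma2_f :: "(nat \<Rightarrow> nat \<Rightarrow> real) \<Rightarrow> nat list \<Rightarrow> real" where
  "sigma2_f th = wedge 2 2 (sigma_f th) (sigma_f th)"

definition eta_f :: "(nat \<Rightarrow> nat \<Rightarrow> real) \<Rightarrow> real \<Rightarrow> nat list \<Rightarrow> real" where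
  "eta_f th t = wedges (map (\<lambda>k. (\<lambda>i. cos t * th (2*k) i + sin t * th (2*k+1) i)) [0,1,2])"

definition eta0_f where "eta0_f th = eta_f th 0"
definition eta1_f where "eta1_f th = eta_f th (2*pi/3)"
definition eta2_f where "eta2_f th = eta_f th (-2*pi/3)"

definition gamma_f :: "(nat \<Rightarrow> nat \<Rightarrow> real) \<Rightarrow> nat list \<Rightarrow> real" where
  "gamma_f th js = 4/3 * (eta0_f th js + eta1_f th js + eta2_f th js)"

text \<open>Almost complex structure J of the structure: J e_{2k+1} = e_{2k+2},
J e_{2k+2} = -e_{2k+1} on the dual frame, acting on forms by (J alpha)(X,..) = alpha(JX,..);
on the coframe: J e^{2k+1} = - e^{2k+2}, J e^{2k+2} = e^{2k+1}.
J acts on decomposable forms factorwise, so J eta^t is the wedge of the J-images.\<close>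
definition J_eta_f :: "(nat \<Rightarrow> nat \<Rightarrow> real) \<Rightarrow> real \<Rightarrow> nat list \<Rightarrow> real" where
  "J_eta_f th t = wedges (map (\<lambda>k. (\<lambda>i. - cos t * th (2*k+1) i + sin t * th (2*k) i)) [0,1,2])"

definition gamma_hat_f :: "(nat \<Rightarrow> nat \<Rightarrow> real) \<Rightarrow> nat list \<Rightarrow> real" where
  "gamma_hat_f th js = 4/3 * (J_eta_f th 0 js + J_eta_f th (2*pi/3) js + J_eta_f th (-2*pi/3) js)"

definition wedge3 :: "(nat \<Rightarrow> nat \<Rightarrow> real) \<Rightarrow> nat \<Rightarrow> nat \<Rightarrow> nat \<Rightarrow> nat list \<Rightarrow> real" where
  "wedge3 th a b d = wedges [th a, th b, th d]"

text \<open>SO(3)-structure defined by the coframe th on the Lie algebra c has invariant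
intrinsic torsion with parameters l1..l4 (paper indices shifted: e^{235} = wedge3 th 1 2 4).\<close>
definition inv_torsion ::
  "(nat \<Rightarrow> nat \<Rightarrow> nat \<Rightarrow> real) \<Rightarrow> (nat \<Rightarrow> nat \<Rightarrow> real) \<Rightarrow> real \<Rightarrow> real \<Rightarrow> real \<Rightarrow> real \<Rightarrow> bool" where
  "inv_torsion c th l1 l2 l3 l4 \<longleftrightarrow>
     form_eq 4 (dform c (eta0_f th)) (\<lambda>js. - (1/2) * l4 * sigma2_f th js) \<and>
     form_eq 4 (dform c (eta1_f th))
        (\<lambda>js. (1/16) * (3* sqrt 3*l1 + 3*l2 + sqrt 3*l3 + l4) * sigma2_f th js) \<and>
     form_eq 4 (dform c (eta2_f th))
        (\<lambda>js. - (1/16) * (3* sqrt 3*l1 - 3*l2 + sqrt 3*l3 - l4) * sigma2_f th js) \<and>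
     form_eq 4 (dform c (gamma_hat_f th)) (\<lambda>js. (1/2) * (l3 - l1) * sigma2_f th js) \<and>
     form_eq 3 (dform c (sigma_f th))
        (\<lambda>js. (3/4) * (l1 - l3) * gamma_f th js + (3/4) * (l2 - l4) * gamma_hat_f th js
            + (1/4) * (l2 + 3*l4) * (wedge3 th 1 2 4 js + wedge3 th 0 3 4 js
                                      + wedge3 th 0 2 5 js + 3 * wedge3 th 1 3 5 js)
            + (1/4) * (3*l1 + l3) * (wedge3 th 1 3 4 js + wedge3 th 0 3 5 js
                                      + wedge3 th 1 2 5 js + 3 * wedge3 th 0 2 4 js))"

definition cubic :: "real \<Rightarrow> real \<Rightarrow> real \<Rightarrow> real \<Rightarrow> real \<Rightarrow> real \<Rightarrow> real" where
  "cubic l1 l2 l3 l4 u1 u2 = l1*u1^3 + l2*u1^2*u2 + l3*u1*u2^2 + l4*u2^3"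

definition half_flat :: "(nat \<Rightarrow> nat \<Rightarrow> nat \<Rightarrow> real) \<Rightarrow> (nat \<Rightarrow> nat \<Rightarrow> real) \<Rightarrow> bool" where
  "half_flat c th \<longleftrightarrow> (\<exists>l1 l2 l3 l4. inv_torsion c th l1 l2 l3 l4 \<and> l2 = l4)"

definition hermitian :: "(nat \<Rightarrow> nat \<Rightarrow> nat \<Rightarrow> real) \<Rightarrow> (nat \<Rightarrow> nat \<Rightarrow> real) \<Rightarrow> bool" where
  "hermitian c th \<longleftrightarrow> (\<exists>l1 l2 l3 l4. inv_torsion c th l1 l2 l3 l4 \<and> l2 = l4 \<and> l1 = l3)"

text \<open>The coframe of u itself (reference coframe e^1..e^6).\<close>
definition std_coframe :: "nat \<Rightarrow> nat \<Rightarrow> real" where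
  "std_coframe a i = (if a = i then 1 else 0)"

text \<open>Coframe of u g^{-1}: x e^1 + y e^2, z e^1 + w e^2, x e^3 + y e^4, ...\<close>
definition new_coframe :: "real \<Rightarrow> real \<Rightarrow> real \<Rightarrow> real \<Rightarrow> nat \<Rightarrow> nat \<Rightarrow> real" where
  "new_coframe x y z w a i =
     (if even a then x * std_coframe (a) i + y * std_coframe (a+1) i
      else z * std_coframe (a-1) i + w * std_coframe a i)"

end

theory Submission
  imports Defs
begin

text \<open>
The forms \<open>\<eta>\<^sup>\<theta>\<close> and \<open>J\<eta>\<^sup>\<theta>\<close> are values of the cubic form-valued polynomial
\<open>\<Phi>(s,t) = (s e\<^sup>1 + t e\<^sup>2) \<and> (s e\<^sup>3 + t e\<^sup>4) \<and> (s e\<^sup>5 + t e\<^sup>6)\<close>, namely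
\<open>\<eta>\<^sup>\<theta> = \<Phi>(cos \<theta>, sin \<theta>)\<close> and \<open>J\<eta>\<^sup>\<theta> = \<Phi>(sin \<theta>, -cos \<theta>)\<close>. Writing \<open>\<psi>\<^sub>0, \<dots>, \<psi>\<^sub>3\<close> for
the coefficients of \<open>\<Phi>\<close>, the defining equations of invariant intrinsic torsion are
equivalent to \<open>d\<Phi>(s,t) = \<onehalf> p(t,-s) \<sigma>\<^sup>2\<close> together with
\<open>d\<sigma> = 3\<lambda>\<^sub>1\<psi>\<^sub>0 + \<lambda>\<^sub>2\<psi>\<^sub>1 + \<lambda>\<^sub>3\<psi>\<^sub>2 + 3\<lambda>\<^sub>4\<psi>\<^sub>3\<close>. The coframe of \<open>ug\<^sup>-\<^sup>1\<close> has
\<open>\<Phi>'(s,t) = \<Phi>(xs + zt, ys + wt)\<close> and \<open>\<sigma>' = (det g) \<sigma>\<close>, so it again has invariant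
intrinsic torsion, with cubic \<open>p'(u\<^sub>1,u\<^sub>2) = p(w u\<^sub>1 - y u\<^sub>2, -z u\<^sub>1 + x u\<^sub>2) / (det g)\<^sup>2\<close>.
Since \<open>\<sigma>\<^sup>2 \<noteq> 0\<close> the parameters \<open>\<lambda>\<^sub>i\<close> are determined by the structure, and the two
conditions of the theorem are \<open>(det g)\<^sup>2 (\<lambda>'\<^sub>2 - \<lambda>'\<^sub>4)\<close> and \<open>(det g)\<^sup>2 (\<lambda>'\<^sub>1 - \<lambda>'\<^sub>3)\<close>.
\<close>

lemma sign_transpose_compose:
  "permutation q \<Longrightarrow> sign (Transposition.transpose a b \<circ> q) = (if a = b then 1 else -1) * sign q"
  by (simp add: sign_compose permutation_swap_id sign_swap_id)

lemma permutation_transpose_compose: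
  "permutation q \<Longrightarrow> permutation (Transposition.transpose a b \<circ> q)"
  by (simp add: permutation_compose permutation_swap_id)

lemmas permutation_sum_simps =
  sum_over_permutations_insert sign_transpose_compose permutation_transpose_compose
  sign_swap_id permutation_swap_id

lemma wedges_two: "wedges [f, g] js = f (js!0) * g (js!1) - f (js!1) * g (js!0)"
proof -
  have "{..<length [f, g]} = {0, 1}" by auto
  then show ?thesis
    unfolding wedges_def by (simp add: permutation_sum_simps algebra_simps)
qed

lemma wedges_three: "wedges [f, g, h] js =
    f (js!0) * g (js!1) * h (js!2) - f (js!0) * g (js!2) * h (js!1)
  - f (js!1) * g (js!0) * h (js!2) + f (js!1) * g (js!2) * h (js!0)
  + f (js!2) * g (js!0) * h (js!1) - f (js!2) * g (js!1) * h (js!0)"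
proof -
  have "{..<length [f, g, h]} = {0, 1, 2}" by auto
  then show ?thesis
    unfolding wedges_def by (simp add: permutation_sum_simps algebra_simps)
qed

subsection \<open>The cubic \<open>\<Phi>\<close> and its coefficients\<close>

definition psi0_f :: "(nat \<Rightarrow> nat \<Rightarrow> real) \<Rightarrow> nat list \<Rightarrow> real" where
  "psi0_f th = wedge3 th 0 2 4"

definition psi1_f :: "(nat \<Rightarrow> nat \<Rightarrow> real) \<Rightarrow> nat list \<Rightarrow> real" where
  "psi1_f th js = wedge3 th 1 2 4 js + wedge3 th 0 3 4 js + wedge3 th 0 2 5 js"

definition psi2_f :: "(nat \<Rightarrow> nat \<Rightarrow> real) \<Rightarrow> nat list \<Rightarrow> real" where
  "psi2_f th js = wedge3 th 1 3 4 js + wedge3 th 0 3 5 js + wedge3 th 1 2 5 js"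

definition psi3_f :: "(nat \<Rightarrow> nat \<Rightarrow> real) \<Rightarrow> nat list \<Rightarrow> real" where
  "psi3_f th = wedge3 th 1 3 5"

definition Phi_f :: "(nat \<Rightarrow> nat \<Rightarrow> real) \<Rightarrow> real \<Rightarrow> real \<Rightarrow> nat list \<Rightarrow> real" where
  "Phi_f th s t js =
     s^3 * psi0_f th js + s^2 * t * psi1_f th js + s * t^2 * psi2_f th js + t^3 * psi3_f th js"

lemmas psi_f_defs = psi0_f_def psi1_f_def psi2_f_def psi3_f_def

lemma eta_f_eq_Phi_f: "eta_f th t = Phi_f th (cos t) (sin t)"
proof -
  have "eta_f th t = wedges [\<lambda>i. cos t * th 0 i + sin t * th 1 i,
      \<lambda>i. cos t * th 2 i + sin t * th 3 i, \<lambda>i. cos t * th 4 i + sin t * th 5 i]"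
    by (simp add: eta_f_def)
  then show ?thesis
    by (intro ext) (simp only: wedges_three, simp add: Phi_f_def psi_f_defs wedge3_def
        wedges_three algebra_simps power2_eq_square power3_eq_cube)
qed

lemma J_eta_f_eq_Phi_f: "J_eta_f th t = Phi_f th (sin t) (- cos t)"
proof -
  have "J_eta_f th t = wedges [\<lambda>i. - cos t * th 1 i + sin t * th 0 i,
      \<lambda>i. - cos t * th 3 i + sin t * th 2 i, \<lambda>i. - cos t * th 5 i + sin t * th 4 i]"
    by (simp add: J_eta_f_def)
  then show ?thesis
    by (intro ext) (simp only: wedges_three, simp add: Phi_f_def psi_f_defs wedge3_def
        wedges_three algebra_simps power2_eq_square power3_eq_cube)
qed

lemma cos_minus_120: "cos (-2*pi/3) = -1/2"
  using cos_120 by (metis cos_minus minus_divide_left mult_minus_left)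

lemma sin_minus_120: "sin (-2*pi/3) = - sqrt 3/2"
  using sin_120 by (metis sin_minus minus_divide_left mult_minus_left)

lemmas trig_120 = cos_120 sin_120 cos_minus_120 sin_minus_120

lemma eta0_f_eq: "eta0_f th = Phi_f th 1 0"
  and eta1_f_eq: "eta1_f th = Phi_f th (-1/2) (sqrt 3/2)"
  and eta2_f_eq: "eta2_f th = Phi_f th (-1/2) (- sqrt 3/2)"
  by (simp_all add: eta0_f_def eta1_f_def eta2_f_def eta_f_eq_Phi_f trig_120)

lemma gamma_f_eq: "gamma_f th js = psi0_f th js - psi2_f th js"
  by (simp add: gamma_f_def eta0_f_eq eta1_f_eq eta2_f_eq Phi_f_def
      power2_eq_square power3_eq_cube algebra_simps)

lemma gamma_hat_f_eq: "gamma_hat_f th js = psi1_f th js - psi3_f th js"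
  unfolding gamma_hat_f_def J_eta_f_eq_Phi_f trig_120
  by (simp add: Phi_f_def power2_eq_square power3_eq_cube algebra_simps)

lemma dform_add: "dform c (\<lambda>js. \<alpha> js + \<beta> js) js = dform c \<alpha> js + dform c \<beta> js"
  unfolding dform_def by (simp add: sum.distrib distrib_left)

lemma dform_diff: "dform c (\<lambda>js. \<alpha> js - \<beta> js) js = dform c \<alpha> js - dform c \<beta> js"
  unfolding dform_def by (simp add: sum_subtractf right_diff_distrib)

lemma dform_scale: "dform c (\<lambda>js. a * \<alpha> js) js = a * dform c \<alpha> js"
  unfolding dform_def by (simp add: sum_distrib_left algebra_simps)

lemmas dform_linear = dform_add dform_diff dform_scale

lemma dform_Phi_f:
  "dform c (Phi_f th s t) js = s^3 * dform c (psi0_f th) js + s^2 * t * dform c (psi1_f th) js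
     + s * t^2 * dform c (psi2_f th) js + t^3 * dform c (psi3_f th) js"
  unfolding Phi_f_def by (simp add: dform_linear)

subsection \<open>Invariant intrinsic torsion in terms of the coefficients of \<open>\<Phi>\<close>\<close>

lemma torsion_linear_system_iff:
  fixes D0 D1 D2 D3 S l1 l2 l3 l4 :: real
  shows "(D0 = -(1/2) * l4 * S \<and>
     (-1/2)^3 * D0 + (-1/2)^2 * (sqrt 3/2) * D1 + (-1/2) * (sqrt 3/2)^2 * D2 + (sqrt 3/2)^3 * D3
       = (1/16) * (3 * sqrt 3 * l1 + 3 * l2 + sqrt 3 * l3 + l4) * S \<and>
     (-1/2)^3 * D0 + (-1/2)^2 * (- sqrt 3/2) * D1 + (-1/2) * (- sqrt 3/2)^2 * D2 + (- sqrt 3/2)^3 * D3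
       = - (1/16) * (3 * sqrt 3 * l1 - 3 * l2 + sqrt 3 * l3 - l4) * S \<and>
     D1 - D3 = (1/2) * (l3 - l1) * S)
   \<longleftrightarrow> (D0 = -(1/2) * l4 * S \<and> D1 = (1/2) * l3 * S \<and> D2 = -(1/2) * l2 * S \<and> D3 = (1/2) * l1 * S)"
  (is "(?eq0 \<and> ?eq1 \<and> ?eq2 \<and> ?eq3) \<longleftrightarrow> ?rhs")
proof -
  have pow: "(sqrt 3 / 2)^2 = 3/4" "(- sqrt 3 / 2)^2 = 3/4"
    "(sqrt 3 / 2)^3 = 3 * sqrt 3 / 8" "(- sqrt 3 / 2)^3 = - 3 * sqrt 3 / 8"
    "(-1/2 :: real)^2 = 1/4" "(-1/2 :: real)^3 = -1/8"
    by (simp_all add: power2_eq_square power3_eq_cube)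
  have "?eq1 \<and> ?eq2 \<longleftrightarrow>
      D0 + 3 * D2 = - (3 * l2 + l4) / 2 * S \<and> D1 + 3 * D3 = (3 * l1 + l3) / 2 * S"
  proof -
    have "?eq1 \<and> ?eq2 \<longleftrightarrow> D0 + 3 * D2 = - (3 * l2 + l4) / 2 * S
        \<and> sqrt 3 * (D1 + 3 * D3) = sqrt 3 * ((3 * l1 + l3) / 2 * S)"
      unfolding pow by (simp add: algebra_simps) linarith
    then show ?thesis by simp
  qed
  then have "?eq0 \<and> ?eq1 \<and> ?eq2 \<and> ?eq3 \<longleftrightarrow> ?eq0 \<and> ?eq3 \<and>
      D0 + 3 * D2 = - (3 * l2 + l4) / 2 * S \<and> D1 + 3 * D3 = (3 * l1 + l3) / 2 * S"
    by blast
  also have "\<dots> \<longleftrightarrow> ?rhs" by (auto simp: algebra_simps)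
  finally show ?thesis .
qed

lemma inv_torsion_iff:
  "inv_torsion c th l1 l2 l3 l4 \<longleftrightarrow>
     form_eq 4 (dform c (psi0_f th)) (\<lambda>js. -(1/2) * l4 * sigma2_f th js) \<and>
     form_eq 4 (dform c (psi1_f th)) (\<lambda>js. (1/2) * l3 * sigma2_f th js) \<and>
     form_eq 4 (dform c (psi2_f th)) (\<lambda>js. -(1/2) * l2 * sigma2_f th js) \<and>
     form_eq 4 (dform c (psi3_f th)) (\<lambda>js. (1/2) * l1 * sigma2_f th js) \<and>
     form_eq 3 (dform c (sigma_f th))
       (\<lambda>js. 3 * l1 * psi0_f th js + l2 * psi1_f th js + l3 * psi2_f th js + 3 * l4 * psi3_f th js)"
proof -
  have dgamma_hat: "dform c (gamma_hat_f th) js = dform c (psi1_f th) js - dform c (psi3_f th) js"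
    for js
  proof -
    have "gamma_hat_f th = (\<lambda>js. psi1_f th js - psi3_f th js)"
      by (rule ext) (rule gamma_hat_f_eq)
    then show ?thesis by (simp add: dform_diff)
  qed
  have dsigma_rhs:
    "(3/4) * (l1 - l3) * gamma_f th js + (3/4) * (l2 - l4) * gamma_hat_f th js
        + (1/4) * (l2 + 3*l4) * (wedge3 th 1 2 4 js + wedge3 th 0 3 4 js
                                  + wedge3 th 0 2 5 js + 3 * wedge3 th 1 3 5 js)
        + (1/4) * (3*l1 + l3) * (wedge3 th 1 3 4 js + wedge3 th 0 3 5 js
                                  + wedge3 th 1 2 5 js + 3 * wedge3 th 0 2 4 js)
      = 3 * l1 * psi0_f th js + l2 * psi1_f th js + l3 * psi2_f th js + 3 * l4 * psi3_f th js"
    for js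
    unfolding gamma_f_eq gamma_hat_f_eq psi_f_defs by (simp add: field_simps)
  have deta: "dform c (eta0_f th) js = dform c (psi0_f th) js" for js
    by (simp add: eta0_f_eq dform_Phi_f)
  show ?thesis
    unfolding inv_torsion_def form_eq_def dsigma_rhs
    unfolding deta eta1_f_eq eta2_f_eq dform_Phi_f dgamma_hat
    using torsion_linear_system_iff by blast
qed

subsection \<open>Change of coframe\<close>

lemma new_coframe_eval:
  "new_coframe x y z w 0 = (\<lambda>i. x * std_coframe 0 i + y * std_coframe 1 i)"
  "new_coframe x y z w 1 = (\<lambda>i. z * std_coframe 0 i + w * std_coframe 1 i)"
  "new_coframe x y z w 2 = (\<lambda>i. x * std_coframe 2 i + y * std_coframe 3 i)"
  "new_coframe x y z w 3 = (\<lambda>i. z * std_coframe 2 i + w * std_coframe 3 i)"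
  "new_coframe x y z w 4 = (\<lambda>i. x * std_coframe 4 i + y * std_coframe 5 i)"
  "new_coframe x y z w 5 = (\<lambda>i. z * std_coframe 4 i + w * std_coframe 5 i)"
  by (auto simp: new_coframe_def fun_eq_iff)

lemma sigma_f_new_coframe:
  "sigma_f (new_coframe x y z w) js = (x * w - y * z) * sigma_f std_coframe js"
  unfolding sigma_f_def new_coframe_eval wedges_two by (simp add: algebra_simps)

lemma sigma2_f_new_coframe:
  "sigma2_f (new_coframe x y z w) js = (x * w - y * z)^2 * sigma2_f std_coframe js"
proof -
  have "sigma_f (new_coframe x y z w) = (\<lambda>js. (x * w - y * z) * sigma_f std_coframe js)"
    by (rule ext) (rule sigma_f_new_coframe)
  then show ?thesis
    unfolding sigma2_f_def wedge_def by (simp add: sum_distrib_left algebra_simps power2_eq_square)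
qed

lemma sigma2_f_std_coframe: "sigma2_f std_coframe [0, 1, 2, 3] = 2"
proof -
  have "{..<2 + 2 :: nat} = {0, 1, 2, 3}" by auto
  then show ?thesis
    unfolding sigma2_f_def wedge_def
    by (simp add: permutation_sum_simps upt_conv_Cons sigma_f_def wedges_two std_coframe_def)
qed

lemma psi0_f_new_coframe:
  "psi0_f (new_coframe x y z w) js = x^3 * psi0_f std_coframe js + x^2 * y * psi1_f std_coframe js
     + x * y^2 * psi2_f std_coframe js + y^3 * psi3_f std_coframe js"
  unfolding psi_f_defs wedge3_def new_coframe_eval wedges_three
  by (simp add: algebra_simps power2_eq_square power3_eq_cube)

lemma psi1_f_new_coframe:
  "psi1_f (new_coframe x y z w) js = 3 * x^2 * z * psi0_f std_coframe js
     + (x^2 * w + 2 * x * y * z) * psi1_f std_coframe js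
     + (2 * x * y * w + y^2 * z) * psi2_f std_coframe js + 3 * y^2 * w * psi3_f std_coframe js"
  unfolding psi_f_defs wedge3_def new_coframe_eval wedges_three
  by (simp add: algebra_simps power2_eq_square power3_eq_cube)

lemma psi2_f_new_coframe:
  "psi2_f (new_coframe x y z w) js = 3 * x * z^2 * psi0_f std_coframe js
     + (2 * x * z * w + z^2 * y) * psi1_f std_coframe js
     + (x * w^2 + 2 * y * z * w) * psi2_f std_coframe js + 3 * y * w^2 * psi3_f std_coframe js"
  unfolding psi_f_defs wedge3_def new_coframe_eval wedges_three
  by (simp add: algebra_simps power2_eq_square power3_eq_cube)

lemma psi3_f_new_coframe:
  "psi3_f (new_coframe x y z w) js = z^3 * psi0_f std_coframe js + z^2 * w * psi1_f std_coframe js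
     + z * w^2 * psi2_f std_coframe js + w^3 * psi3_f std_coframe js"
  unfolding psi_f_defs wedge3_def new_coframe_eval wedges_three
  by (simp add: algebra_simps power2_eq_square power3_eq_cube)

lemmas psi_f_new_coframe =
  psi0_f_new_coframe psi1_f_new_coframe psi2_f_new_coframe psi3_f_new_coframe

text \<open>The new parameters are the coefficients of \<open>p(w u\<^sub>1 - y u\<^sub>2, -z u\<^sub>1 + x u\<^sub>2) / D\<^sup>2\<close>.\<close>

lemma inv_torsion_new_coframe:
  fixes l1 l2 l3 l4 x y z w :: real
  defines "D \<equiv> x * w - y * z"
    and "N1 \<equiv> l1 * w^3 - l2 * w^2 * z + l3 * w * z^2 - l4 * z^3"
    and "N2 \<equiv> - 3 * l1 * w^2 * y + l2 * (w^2 * x + 2 * w * y * z) - l3 * (2 * w * x * z + y * z^2)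
      + 3 * l4 * x * z^2"
    and "N3 \<equiv> 3 * l1 * w * y^2 - l2 * (2 * w * x * y + y^2 * z) + l3 * (w * x^2 + 2 * x * y * z)
      - 3 * l4 * x^2 * z"
    and "N4 \<equiv> - l1 * y^3 + l2 * x * y^2 - l3 * x^2 * y + l4 * x^3"
  assumes tors: "inv_torsion c std_coframe l1 l2 l3 l4" and D: "D \<noteq> 0"
  shows "inv_torsion c (new_coframe x y z w) (N1 / D^2) (N2 / D^2) (N3 / D^2) (N4 / D^2)"
proof -
  let ?th = "new_coframe x y z w"
  have sigma2: "sigma2_f ?th js = D^2 * sigma2_f std_coframe js" for js
    unfolding D_def by (rule sigma2_f_new_coframe)
  \<comment> \<open>the pairing \<open>3\<lambda>\<^sub>1\<psi>\<^sub>0 + \<lambda>\<^sub>2\<psi>\<^sub>1 + \<lambda>\<^sub>3\<psi>\<^sub>2 + 3\<lambda>\<^sub>4\<psi>\<^sub>3\<close> of the new parameters with the new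
    \<open>\<psi>\<^sub>k\<close> is \<open>D\<close> times the old one, as \<open>d\<sigma>' = D d\<sigma>\<close> requires\<close>
  have pairing: "D^3 * (3 * l1 * A0 + l2 * A1 + l3 * A2 + 3 * l4 * A3) =
       3 * N1 * (x^3 * A0 + x^2 * y * A1 + x * y^2 * A2 + y^3 * A3)
     + N2 * (3 * x^2 * z * A0 + (x^2 * w + 2 * x * y * z) * A1 + (2 * x * y * w + y^2 * z) * A2
             + 3 * y^2 * w * A3)
     + N3 * (3 * x * z^2 * A0 + (2 * x * z * w + z^2 * y) * A1 + (x * w^2 + 2 * y * z * w) * A2
             + 3 * y * w^2 * A3)
     + 3 * N4 * (z^3 * A0 + z^2 * w * A1 + z * w^2 * A2 + w^3 * A3)" for A0 A1 A2 A3
    unfolding D_def N1_def N2_def N3_def N4_def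
    by (simp add: algebra_simps power2_eq_square power3_eq_cube)
  have std: "dform c (psi0_f std_coframe) js = -(1/2) * l4 * sigma2_f std_coframe js"
      "dform c (psi1_f std_coframe) js = (1/2) * l3 * sigma2_f std_coframe js"
      "dform c (psi2_f std_coframe) js = -(1/2) * l2 * sigma2_f std_coframe js"
      "dform c (psi3_f std_coframe) js = (1/2) * l1 * sigma2_f std_coframe js"
    if "length js = 4 \<and> set js \<subseteq> {..<6}" for js
    using tors that by (simp_all add: inv_torsion_iff form_eq_def)
  have std_sigma: "dform c (sigma_f std_coframe) js = 3 * l1 * psi0_f std_coframe js
      + l2 * psi1_f std_coframe js + l3 * psi2_f std_coframe js + 3 * l4 * psi3_f std_coframe js"
    if "length js = 3 \<and> set js \<subseteq> {..<6}" for js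
    using tors that by (simp add: inv_torsion_iff form_eq_def)
  have new_sigma: "dform c (sigma_f ?th) js = 3 * (N1 / D^2) * psi0_f ?th js
      + (N2 / D^2) * psi1_f ?th js + (N3 / D^2) * psi2_f ?th js + 3 * (N4 / D^2) * psi3_f ?th js"
    if "length js = 3 \<and> set js \<subseteq> {..<6}" for js
    unfolding sigma_f_new_coframe[abs_def] dform_scale D_def[symmetric] std_sigma[OF that]
      psi_f_new_coframe
    using D pairing[of "psi0_f std_coframe js" "psi1_f std_coframe js" "psi2_f std_coframe js"
      "psi3_f std_coframe js"]
    by (simp add: field_simps power2_eq_square power3_eq_cube)
  have new_psi: "dform c (psi0_f ?th) js = -(1/2) * (N4 / D^2) * sigma2_f ?th js \<and>
      dform c (psi1_f ?th) js = (1/2) * (N3 / D^2) * sigma2_f ?th js \<and>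
      dform c (psi2_f ?th) js = -(1/2) * (N2 / D^2) * sigma2_f ?th js \<and>
      dform c (psi3_f ?th) js = (1/2) * (N1 / D^2) * sigma2_f ?th js"
    if "length js = 4 \<and> set js \<subseteq> {..<6}" for js
    using D
    by (simp only: psi_f_new_coframe[abs_def] dform_linear sigma2 std[OF that])
      (simp add: N1_def N2_def N3_def N4_def field_simps power2_eq_square power3_eq_cube)
  show ?thesis
    unfolding inv_torsion_iff form_eq_def using new_psi new_sigma by blast
qed

lemma inv_torsion_unique:
  assumes "inv_torsion c th l1 l2 l3 l4" and "inv_torsion c th m1 m2 m3 m4"
    and "sigma2_f th [0, 1, 2, 3] \<noteq> 0"
  shows "l1 = m1 \<and> l2 = m2 \<and> l3 = m3 \<and> l4 = m4"
proof -
  have "length [0, 1, 2, 3 :: nat] = 4 \<and> set [0, 1, 2, 3 :: nat] \<subseteq> {..<6}" by auto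
  then have eval: "form_eq 4 \<alpha> \<beta> \<Longrightarrow> \<alpha> [0, 1, 2, 3] = \<beta> [0, 1, 2, 3]" for \<alpha> \<beta>
    unfolding form_eq_def by blast
  let ?S = "sigma2_f th [0, 1, 2, 3]"
  have "-(1/2) * l4 * ?S = -(1/2) * m4 * ?S" "(1/2) * l3 * ?S = (1/2) * m3 * ?S"
    "-(1/2) * l2 * ?S = -(1/2) * m2 * ?S" "(1/2) * l1 * ?S = (1/2) * m1 * ?S"
    using assms(1,2) unfolding inv_torsion_iff by (auto dest!: eval)
  with assms(3) show ?thesis by simp
qed

lemma half_flat_iff_and_hermitian_iff:
  assumes "inv_torsion c th l1 l2 l3 l4" and "sigma2_f th [0, 1, 2, 3] \<noteq> 0"
  shows "half_flat c th \<longleftrightarrow> l2 = l4"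
    and "hermitian c th \<longleftrightarrow> l2 = l4 \<and> l1 = l3"
  using assms inv_torsion_unique unfolding half_flat_def hermitian_def by metis+

lemma deriv_cubic_fst:
  "deriv (\<lambda>s. cubic l1 l2 l3 l4 s u) v = 3 * l1 * v^2 + 2 * l2 * v * u + l3 * u^2"
  unfolding cubic_def
  by (rule DERIV_imp_deriv) (auto intro!: derivative_eq_intros simp: power2_eq_square algebra_simps)

lemma deriv_cubic_snd:
  "deriv (\<lambda>s. cubic l1 l2 l3 l4 v s) u = l2 * v^2 + 2 * l3 * v * u + 3 * l4 * u^2"
  unfolding cubic_def
  by (rule DERIV_imp_deriv) (auto intro!: derivative_eq_intros simp: power2_eq_square algebra_simps)

theorem lemma4p3:
  fixes c :: "nat \<Rightarrow> nat \<Rightarrow> nat \<Rightarrow> real"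
    and l1 l2 l3 l4 x y z w :: real
  defines "p \<equiv> cubic l1 l2 l3 l4"
  assumes lie: "lie_algebra6 c"
    and tors: "inv_torsion c std_coframe l1 l2 l3 l4"
    and gl2: "x * w - y * z \<noteq> 0"
  shows "(half_flat c (new_coframe x y z w) \<longleftrightarrow>
           p y (-x) - y * deriv (\<lambda>s. p s (-z)) w + x * deriv (\<lambda>s. p w s) (-z) = 0)
       \<and> (hermitian c (new_coframe x y z w) \<longleftrightarrow>
           half_flat c (new_coframe x y z w) \<and>
           p w (-z) - w * deriv (\<lambda>s. p s (-x)) y + z * deriv (\<lambda>s. p y s) (-x) = 0)"
proof -
  have "sigma2_f (new_coframe x y z w) [0, 1, 2, 3] \<noteq> 0"
    unfolding sigma2_f_new_coframe sigma2_f_std_coframe using gl2 by simp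
  note params = half_flat_iff_and_hermitian_iff[OF inv_torsion_new_coframe[OF tors gl2] this]
  have "(x * w - y * z)^2 \<noteq> 0" using gl2 by simp
  moreover have "p y (-x) - y * deriv (\<lambda>s. p s (-z)) w + x * deriv (\<lambda>s. p w s) (-z) =
      (- 3 * l1 * w^2 * y + l2 * (w^2 * x + 2 * w * y * z) - l3 * (2 * w * x * z + y * z^2)
        + 3 * l4 * x * z^2) - (- l1 * y^3 + l2 * x * y^2 - l3 * x^2 * y + l4 * x^3)"
    unfolding p_def deriv_cubic_fst deriv_cubic_snd
    by (simp add: cubic_def power2_eq_square power3_eq_cube algebra_simps)
  moreover have "p w (-z) - w * deriv (\<lambda>s. p s (-x)) y + z * deriv (\<lambda>s. p y s) (-x) =
      (l1 * w^3 - l2 * w^2 * z + l3 * w * z^2 - l4 * z^3)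
      - (3 * l1 * w * y^2 - l2 * (2 * w * x * y + y^2 * z) + l3 * (w * x^2 + 2 * x * y * z)
        - 3 * l4 * x^2 * z)"
    unfolding p_def deriv_cubic_fst deriv_cubic_snd
    by (simp add: cubic_def power2_eq_square power3_eq_cube algebra_simps)
  ultimately show ?thesis
    unfolding params by simp
qed

end
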